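(* Let $\dot G$ be a connected, non-complete, $5$-regular and $3$ net-regular SRSG belonging to $\mathcal C_1\cup\mathcal C_4\cup\mathcal C_5$. If $\dot G$ contains an unbalanced triangle (a triangle whose product of edge signs is $-1$), then $\dot G$ is isomorphic either to $\dot S^1_8$, an SRSG with parameters $(8,5,-2,4,4)$, or to $\dot S^1_{10}$, an SRSG with parameters $(10,5,-2,4,2)$.
   Context: A signed graph $\dot G=(G,\sigma)$ is a simple graph $G$ with a sign function $\sigma:E(G)\to\{+1,-1\}$; adjacency matrix $A_{\dot G}$ has entries $\sigma(v_iv_j)$ for adjacent $v_i,v_j$ and $0$ otherwise. Connectedness and degree refer to $G$; $d^\pm(v)$ are the numbers of positive/negative edges at $v$; net-degree is $d^+(v)-d^-(v)$; $\rho$ net-regular means all net-degrees equal $\rho$. Homogeneous means all edges have the same sign. $\dot G$ on $n$ vertices is an SRSG if it is neither homogeneous complete nor edgeless and there exist $r\in\mathbb N$, $a,b,c\in\mathbb Z$ with $(A_{\dot G}^2)_{ii}=r$, $(A_{\dot G}^2)_{ij}=a$ for positive edges $v_iv_j$, $=b$ for negative edges, $=c$ for distinct non-adjacent $v_i,v_j$; parameters $(n,r,a,b,c)$ (non-complete) or $(n,r,a,b)$ (complete). Inhomogeneous SRSGs are split into classes: $\mathcal C_1$: $a=-b$ and either complete, or non-complete with $c\neq0$; $\mathcal C_2$: $a=-b$, non-complete, $c=0$; $\mathcal C_3$: $a\ne -b$ and either complete or non-complete with $c=\frac{a+b}{2}$; $\mathcal C_4$: $a\neq-b$, non-complete, $c=0$;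 $\mathcal C_5$: $a\ne-b$, non-complete, $c\ne\frac{a+b}2$, $c\neq 0$. For $m\in\{4,5\}$, $\dot S^1_{2m}$ has vertex set $\{x_t,y_t:t\in\mathbb Z_m\}$, negative edges $x_ty_t$ ($t\in\mathbb Z_m$), positive edges all four edges between $\{x_t,y_t\}$ and $\{x_{t+1},y_{t+1}\}$ for each $t$, and no other edges. *)

theory Defs
  imports Main
begin

text \<open>A signed graph on a finite vertex set V (inside an ambient type 'a), given by
  its signed adjacency function sg: sg u v is +1 / -1 for a positive / negative edge
  uv and 0 if u, v are non-adjacent (in particular sg v v = 0).\<close>

record 'a sgraph =
  verts :: "'a set"
  sgn :: "'a \<Rightarrow> 'a \<Rightarrow> int"

definition wf_sgraph :: "'a sgraph \<Rightarrow> bool" where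
  "wf_sgraph G \<longleftrightarrow> finite (verts G)
     \<and> (\<forall>u v. sgn G u v \<in> {-1, 0, 1})
     \<and> (\<forall>u v. sgn G u v = sgn G v u)
     \<and> (\<forall>v. sgn G v v = 0)
     \<and> (\<forall>u v. sgn G u v \<noteq> 0 \<longrightarrow> u \<in> verts G \<and> v \<in> verts G)"

definition adj :: "'a sgraph \<Rightarrow> 'a \<Rightarrow> 'a \<Rightarrow> bool" where
  "adj G u v \<longleftrightarrow> sgn G u v \<noteq> 0"

definition A2 :: "'a sgraph \<Rightarrow> 'a \<Rightarrow> 'a \<Rightarrow> int" where
  "A2 G u v = (\<Sum>w\<in>verts G. sgn G u w * sgn G w v)"

definition degree :: "'a sgraph \<Rightarrow> 'a \<Rightarrow> nat" where
  "degree G v = card {u \<in> verts G. adj G v u}"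

definition pos_degree :: "'a sgraph \<Rightarrow> 'a \<Rightarrow> nat" where
  "pos_degree G v = card {u \<in> verts G. sgn G v u = 1}"

definition neg_degree :: "'a sgraph \<Rightarrow> 'a \<Rightarrow> nat" where
  "neg_degree G v = card {u \<in> verts G. sgn G v u = -1}"

definition net_degree :: "'a sgraph \<Rightarrow> 'a \<Rightarrow> int" where
  "net_degree G v = int (pos_degree G v) - int (neg_degree G v)"

definition regular :: "'a sgraph \<Rightarrow> nat \<Rightarrow> bool" where
  "regular G k \<longleftrightarrow> (\<forall>v\<in>verts G. degree G v = k)"

definition net_regular :: "'a sgraph \<Rightarrow> int \<Rightarrow> bool" where
  "net_regular G \<rho> \<longleftrightarrow> (\<forall>v\<in>verts G. net_degree G v = \<rho>)"

definition connected :: "'a sgraph \<Rightarrow> bool" where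
  "connected G \<longleftrightarrow> (\<forall>u\<in>verts G. \<forall>v\<in>verts G. (adj G)\<^sup>*\<^sup>* u v)"

definition complete :: "'a sgraph \<Rightarrow> bool" where
  "complete G \<longleftrightarrow> (\<forall>u\<in>verts G. \<forall>v\<in>verts G. u \<noteq> v \<longrightarrow> adj G u v)"

definition edgeless :: "'a sgraph \<Rightarrow> bool" where
  "edgeless G \<longleftrightarrow> (\<forall>u v. sgn G u v = 0)"

definition homogeneous :: "'a sgraph \<Rightarrow> bool" where
  "homogeneous G \<longleftrightarrow> (\<forall>u v. sgn G u v \<ge> 0) \<or> (\<forall>u v. sgn G u v \<le> 0)"

text \<open>SRSG with parameters (n,r,a,b,c); for complete graphs c is irrelevant
  (the condition on non-adjacent pairs is vacuous).\<close>
definition srsg_params :: "'a sgraph \<Rightarrow> nat \<Rightarrow> nat \<Rightarrow> int \<Rightarrow> int \<Rightarrow> int \<Rightarrow> bool" where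
  "srsg_params G n r a b c \<longleftrightarrow> wf_sgraph G \<and> card (verts G) = n
     \<and> \<not> (homogeneous G \<and> complete G) \<and> \<not> edgeless G
     \<and> (\<forall>v\<in>verts G. A2 G v v = int r)
     \<and> (\<forall>u\<in>verts G. \<forall>v\<in>verts G. sgn G u v = 1 \<longrightarrow> A2 G u v = a)
     \<and> (\<forall>u\<in>verts G. \<forall>v\<in>verts G. sgn G u v = -1 \<longrightarrow> A2 G u v = b)
     \<and> (\<forall>u\<in>verts G. \<forall>v\<in>verts G. u \<noteq> v \<and> sgn G u v = 0 \<longrightarrow> A2 G u v = c)"

definition srsg :: "'a sgraph \<Rightarrow> bool" where
  "srsg G \<longleftrightarrow> (\<exists>n r a b c. srsg_params G n r a b c)"

definition class_C1 :: "'a sgraph \<Rightarrow> bool" where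
  "class_C1 G \<longleftrightarrow> \<not> homogeneous G \<and> (\<exists>n r a b c. srsg_params G n r a b c \<and> a = -b
      \<and> (complete G \<or> (\<not> complete G \<and> c \<noteq> 0)))"

definition class_C4 :: "'a sgraph \<Rightarrow> bool" where
  "class_C4 G \<longleftrightarrow> \<not> homogeneous G \<and> (\<exists>n r a b c. srsg_params G n r a b c \<and> a \<noteq> -b
      \<and> \<not> complete G \<and> c = 0)"

definition class_C5 :: "'a sgraph \<Rightarrow> bool" where
  "class_C5 G \<longleftrightarrow> \<not> homogeneous G \<and> (\<exists>n r a b c. srsg_params G n r a b c \<and> a \<noteq> -b
      \<and> \<not> complete G \<and> 2 * c \<noteq> a + b \<and> c \<noteq> 0)"

definition has_unbalanced_triangle :: "'a sgraph \<Rightarrow> bool" where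
  "has_unbalanced_triangle G \<longleftrightarrow> (\<exists>u\<in>verts G. \<exists>v\<in>verts G. \<exists>w\<in>verts G.
      u \<noteq> v \<and> v \<noteq> w \<and> u \<noteq> w \<and> adj G u v \<and> adj G v w \<and> adj G w u
      \<and> sgn G u v * sgn G v w * sgn G w u = -1)"

definition sg_iso :: "'a sgraph \<Rightarrow> 'b sgraph \<Rightarrow> bool" where
  "sg_iso G H \<longleftrightarrow> (\<exists>f. bij_betw f (verts G) (verts H)
      \<and> (\<forall>u\<in>verts G. \<forall>v\<in>verts G. sgn H (f u) (f v) = sgn G u v))"

text \<open>The signed graph S^1_{2m}: vertex (t, False) is x_t, (t, True) is y_t,
  t \<in> Z_m represented by 0..m-1.\<close>
definition S1 :: "nat \<Rightarrow> (nat \<times> bool) sgraph" where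
  "S1 m = \<lparr> verts = {0..<m} \<times> UNIV,
     sgn = (\<lambda>(t, p) (s, q).
        if t < m \<and> s < m then
          (if t = s \<and> p \<noteq> q then -1
           else if s = (t + 1) mod m \<or> t = (s + 1) mod m then 1 else 0)
        else 0) \<rparr>"

end

theory Submission
  imports Defs
begin

text \<open>Since every vertex has degree 5 and net-degree 3, it has four positive neighbours and a unique
  negative neighbour, its mate. With \<open>M\<close> the permutation matrix of the mate involution,
  \<open>A\<^sup>2 = cJ + (r - c)I + (a - c)A + (a + b - 2c)M\<close>, and the class hypothesis says
  \<open>a + b \<noteq> 2c\<close>; as \<open>A\<close> commutes with \<open>A\<^sup>2\<close>, \<open>I\<close> and \<open>J\<close>, it commutes with \<open>M\<close>.
  An unbalanced triangle forces \<open>b \<ge> 1\<close>, and then counting \<open>A\<^sup>2\<close> along a positive edge shows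
  that mates have the same positive neighbours. So every positive neighbourhood is the union of two
  mate pairs, and the graph of mate pairs is connected and 2-regular, i.e. a cycle. Length 3 makes
  the graph complete, lengths 4 and 5 give \<open>S\<^sup>1\<^sub>8\<close> and \<open>S\<^sup>1\<^sub>1\<^sub>0\<close>, and a longer cycle would force
  \<open>c = 2\<close> (pairs at distance two) and \<open>c = 0\<close> (pairs at distance three) at once.\<close>

section \<open>The signed graphs S1 m\<close>

lemma sg_iso_sym:
  assumes "sg_iso H G"
  shows "sg_iso G H"
proof -
  obtain f where f: "bij_betw f (verts H) (verts G)"
    and sgn_f: "\<forall>u\<in>verts H. \<forall>v\<in>verts H. sgn G (f u) (f v) = sgn H u v"
    using assms unfolding sg_iso_def by blast
  let ?g = "inv_into (verts H) f"
  have "sgn H (?g u) (?g v) = sgn G u v" if "u \<in> verts G" "v \<in> verts G" for u v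
    using sgn_f that bij_betw_inv_into_right[OF f] bij_betw_apply[OF bij_betw_inv_into[OF f]]
    by metis
  then show ?thesis unfolding sg_iso_def using bij_betw_inv_into[OF f] by blast
qed

lemma verts_S1: "verts (S1 k) = {0..<k} \<times> UNIV"
  by (simp add: S1_def)

lemma sgn_S1:
  assumes "t < k" "t' < k"
  shows "sgn (S1 k) (t, p) (t', q) =
    (if t = t' \<and> p \<noteq> q then -1 else if t' = (t + 1) mod k \<or> t = (t' + 1) mod k then 1 else 0)"
  using assms by (simp add: S1_def)

lemma succ_mod_neq:
  fixes t k :: nat
  assumes "2 \<le> k" "t < k"
  shows "(t + 1) mod k \<noteq> t"
  using assms by (cases "t + 1 = k") auto

lemma pred_mod_eq_iff:
  fixes t t' k :: nat
  assumes "t < k" "t' < k"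
  shows "t' = (t + k - 1) mod k \<longleftrightarrow> t = (t' + 1) mod k"
  using assms by (cases "t = 0"; cases "t' + 1 = k") (auto simp: mod_if)

lemma wf_S1: "2 \<le> k \<Longrightarrow> wf_sgraph (S1 k)"
  unfolding wf_sgraph_def
  by (auto simp: S1_def split: prod.splits dest: succ_mod_neq)

lemma S1_not_homogeneous:
  assumes "2 \<le> k"
  shows "\<not> homogeneous (S1 k)"
proof -
  have "sgn (S1 k) (0, False) (0, True) = -1" "sgn (S1 k) (0, False) (1, True) = 1"
    using assms by (simp_all add: S1_def)
  then show ?thesis unfolding homogeneous_def by (metis neg_0_le_iff_le not_one_le_zero zero_le_one)
qed

lemma S1_not_edgeless:
  assumes "0 < k"
  shows "\<not> edgeless (S1 k)"
proof -
  have "sgn (S1 k) (0, False) (0, True) = -1" using assms by (simp add: S1_def)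
  then show ?thesis unfolding edgeless_def by force
qed

lemma srsg_params_S1_4: "srsg_params (S1 4) 8 5 (-2) 4 4"
proof -
  have "{0..<4::nat} = {0, 1, 2, 3}" by auto
  then have V: "verts (S1 4) =
      {(0, False), (0, True), (1, False), (1, True), (2, False), (2, True), (3, False), (3, True)}"
    unfolding verts_S1 by auto
  show ?thesis
    unfolding srsg_params_def A2_def V
    using wf_S1[of 4] S1_not_homogeneous[of 4] S1_not_edgeless[of 4] by (simp add: V S1_def)
qed

lemma srsg_params_S1_5: "srsg_params (S1 5) 10 5 (-2) 4 2"
proof -
  have "{0..<5::nat} = {0, 1, 2, 3, 4}" by auto
  then have V: "verts (S1 5) =
      {(0, False), (0, True), (1, False), (1, True), (2, False), (2, True), (3, False), (3, True),
       (4, False), (4, True)}"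
    unfolding verts_S1 by auto
  show ?thesis
    unfolding srsg_params_def A2_def V
    using wf_S1[of 5] S1_not_homogeneous[of 5] S1_not_edgeless[of 5] by (simp add: V S1_def)
qed

section \<open>Mates\<close>

definition pos_nbhd :: "'a sgraph \<Rightarrow> 'a \<Rightarrow> 'a set" where
  "pos_nbhd G u = {v \<in> verts G. sgn G u v = 1}"

definition mate :: "'a sgraph \<Rightarrow> 'a \<Rightarrow> 'a" where
  "mate G u = (THE v. v \<in> verts G \<and> sgn G u v = -1)"

text \<open>The last assumption says that the mate permutation occurs in \<open>A\<^sup>2\<close>; for non-complete graphs
  it holds in the classes \<open>C\<^sub>1\<close>, \<open>C\<^sub>4\<close> and \<open>C\<^sub>5\<close>.\<close>
locale srsg_5_3 =
  fixes G :: "'a sgraph" and n r :: nat and a b c :: int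
  assumes params: "srsg_params G n r a b c"
    and regular_5: "regular G 5"
    and net_regular_3: "net_regular G 3"
    and mate_coeff_nonzero: "a + b \<noteq> 2 * c"
begin

abbreviation "V \<equiv> verts G"
abbreviation "s \<equiv> sgn G"
abbreviation "P \<equiv> pos_nbhd G"
abbreviation "m \<equiv> mate G"

lemma wf: "wf_sgraph G"
  using params unfolding srsg_params_def by blast

lemma finite_V: "finite V"
  using wf unfolding wf_sgraph_def by blast

lemma sgn_cases: "s u v = -1 \<or> s u v = 0 \<or> s u v = 1"
  using wf unfolding wf_sgraph_def by blast

lemma sgn_le_one: "s u v \<le> 1"
  using sgn_cases[of u v] by auto

lemma sgn_sym: "s u v = s v u"
  using wf unfolding wf_sgraph_def by blast

lemma sgn_self [simp]: "s v v = 0"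
  using wf unfolding wf_sgraph_def by blast

lemma sgn_nonzero_in_V: "s u v \<noteq> 0 \<Longrightarrow> u \<in> V \<and> v \<in> V"
  using wf unfolding wf_sgraph_def by blast

lemma A2_diag: "v \<in> V \<Longrightarrow> A2 G v v = int r"
  and A2_pos: "u \<in> V \<Longrightarrow> v \<in> V \<Longrightarrow> s u v = 1 \<Longrightarrow> A2 G u v = a"
  and A2_neg: "u \<in> V \<Longrightarrow> v \<in> V \<Longrightarrow> s u v = -1 \<Longrightarrow> A2 G u v = b"
  and A2_nonadj: "u \<in> V \<Longrightarrow> v \<in> V \<Longrightarrow> u \<noteq> v \<Longrightarrow> s u v = 0 \<Longrightarrow> A2 G u v = c"
  using params unfolding srsg_params_def by blast+

lemma pos_nbhd_iff: "x \<in> P u \<longleftrightarrow> s u x = 1"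
  unfolding pos_nbhd_def using sgn_nonzero_in_V[of u x] by auto

lemma pos_nbhd_sym: "x \<in> P u \<longleftrightarrow> u \<in> P x"
  by (simp add: pos_nbhd_iff sgn_sym)

lemma pos_nbhd_subset: "P u \<subseteq> V"
  unfolding pos_nbhd_def by blast

lemma finite_pos_nbhd: "finite (P u)"
  using finite_V pos_nbhd_subset by (rule finite_subset[rotated])

lemma not_in_own_pos_nbhd [simp]: "u \<notin> P u"
  by (simp add: pos_nbhd_iff)

lemma card_pos_nbhd_and_neg_nbrs:
  assumes v: "v \<in> V"
  shows "card (P v) = 4" "card {u \<in> V. s v u = -1} = 1"
proof -
  let ?N = "{u \<in> V. s v u = -1}"
  have deg: "card (P v \<union> ?N) = 5"
  proof -
    have "{u \<in> V. adj G v u} = P v \<union> ?N"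
      unfolding adj_def pos_nbhd_def using sgn_cases by auto
    then show ?thesis using regular_5 v unfolding regular_def degree_def by metis
  qed
  have net: "int (card (P v)) - int (card ?N) = 3"
    using net_regular_3 v
    unfolding net_regular_def net_degree_def pos_degree_def neg_degree_def pos_nbhd_def by blast
  have "card (P v \<union> ?N) = card (P v) + card ?N"
    by (rule card_Un_disjoint) (auto simp: finite_pos_nbhd finite_V pos_nbhd_def)
  with deg net show "card (P v) = 4" "card ?N = 1" by linarith+
qed

lemma card_pos_nbhd: "v \<in> V \<Longrightarrow> card (P v) = 4"
  using card_pos_nbhd_and_neg_nbrs(1) .

lemma mate_unique_neg_nbr:
  assumes v: "v \<in> V"
  shows "u \<in> V \<and> s v u = -1 \<longleftrightarrow> u = m v"
proof -
  obtain x where x: "{u \<in> V. s v u = -1} = {x}"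
    using card_pos_nbhd_and_neg_nbrs(2)[OF v] by (rule card_1_singletonE)
  then have "m v = x" unfolding mate_def by (metis (mono_tags) mem_Collect_eq singleton_iff the_equality)
  with x show ?thesis by blast
qed

lemma mate_in_V [simp]: "v \<in> V \<Longrightarrow> m v \<in> V"
  and sgn_mate [simp]: "v \<in> V \<Longrightarrow> s v (m v) = -1"
  and sgn_mate' [simp]: "v \<in> V \<Longrightarrow> s (m v) v = -1"
  using mate_unique_neg_nbr sgn_sym by metis+

lemma eq_mate_if_neg: "v \<in> V \<Longrightarrow> s v u = -1 \<Longrightarrow> u = m v"
  using mate_unique_neg_nbr sgn_nonzero_in_V by (metis zero_neq_neg_one)

lemma mate_mate [simp]: "v \<in> V \<Longrightarrow> m (m v) = v"
  using eq_mate_if_neg[of "m v" v] by simp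

lemma mate_neq [simp]: "v \<in> V \<Longrightarrow> m v \<noteq> v" "v \<in> V \<Longrightarrow> v \<noteq> m v"
  using sgn_mate sgn_self by (metis zero_neq_neg_one)+

lemma mate_not_in_pos_nbhd [simp]: "u \<in> V \<Longrightarrow> m u \<notin> P u"
  by (simp add: pos_nbhd_iff)

lemma sgn_eq_if: "u \<in> V \<Longrightarrow> s u x = (if x \<in> P u then 1 else if x = m u then -1 else 0)"
  using pos_nbhd_iff eq_mate_if_neg sgn_cases by (metis sgn_mate)

lemma sum_sgn_mult:
  assumes u: "u \<in> V"
  shows "(\<Sum>w\<in>V. s u w * g w) = (\<Sum>w\<in>P u. g w) - g (m u)"
proof -
  have "(\<Sum>w\<in>V. s u w * g w) =
      (\<Sum>w\<in>V. (if w \<in> P u then g w else 0) - (if w = m u then g w else 0))"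
    by (rule sum.cong) (use u in \<open>auto simp: sgn_eq_if[OF u]\<close>)
  also have "\<dots> = (\<Sum>w\<in>{w \<in> V. w \<in> P u}. g w) - g (m u)"
    using finite_V u by (simp add: sum_subtractf sum.inter_filter)
  also have "{w \<in> V. w \<in> P u} = P u"
    using pos_nbhd_subset by blast
  finally show ?thesis .
qed

lemma A2_eq_sum: "u \<in> V \<Longrightarrow> A2 G u x = (\<Sum>z\<in>P u. s z x) - s (m u) x"
  unfolding A2_def using sum_sgn_mult[of u "\<lambda>z. s z x"] by simp

lemma A2_sym: "A2 G u v = A2 G v u"
  unfolding A2_def by (rule sum.cong) (simp_all add: sgn_sym mult.commute)

lemma A2_eq:
  assumes u: "u \<in> V" and v: "v \<in> V"
  shows "A2 G u v = c + (int r - c) * (if u = v then 1 else 0) + (a - c) * s u v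
    + (a + b - 2 * c) * (if u = m v then 1 else 0)"
proof (cases "u = v")
  case True
  then show ?thesis using A2_diag u v by simp
next
  case False
  consider "s u v = -1" | "s u v = 0" | "s u v = 1" using sgn_cases by blast
  then show ?thesis
  proof cases
    case 1
    then have "u = m v" using eq_mate_if_neg[OF v] sgn_sym by metis
    then show ?thesis using 1 False A2_neg u v by simp
  next
    case 2
    then have "u \<noteq> m v" using v by force
    then show ?thesis using 2 False A2_nonadj u v by simp
  next
    case 3
    then have "u \<noteq> m v" using v by force
    then show ?thesis using 3 False A2_pos u v by simp
  qed
qed

lemma row_sum_sgn: "u \<in> V \<Longrightarrow> (\<Sum>w\<in>V. s u w) = 3"
  using sum_sgn_mult[of u "\<lambda>_. 1"] card_pos_nbhd[of u] by simp

lemma A_A2_eq: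
  assumes u: "u \<in> V" and v: "v \<in> V"
  shows "(\<Sum>w\<in>V. s u w * A2 G w v)
    = 3 * c + (int r - c) * s u v + (a - c) * A2 G u v + (a + b - 2 * c) * s u (m v)"
proof -
  let ?\<delta> = "\<lambda>x w. if w = x then 1 else 0 :: int"
  have "(\<Sum>w\<in>V. s u w * A2 G w v) = (\<Sum>w\<in>V. c * s u w + (int r - c) * (s u w * ?\<delta> v w)
      + (a - c) * (s u w * s w v) + (a + b - 2 * c) * (s u w * ?\<delta> (m v) w))"
    by (rule sum.cong) (use v in \<open>auto simp: A2_eq algebra_simps\<close>)
  also have "\<dots> = c * (\<Sum>w\<in>V. s u w) + (int r - c) * (\<Sum>w\<in>V. s u w * ?\<delta> v w)
      + (a - c) * (\<Sum>w\<in>V. s u w * s w v) + (a + b - 2 * c) * (\<Sum>w\<in>V. s u w * ?\<delta> (m v) w)"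
    by (simp add: sum.distrib sum_distrib_left)
  also have "(\<Sum>w\<in>V. s u w * ?\<delta> v w) = s u v"
    using finite_V v by (simp add: if_distrib cong: if_cong)
  also have "(\<Sum>w\<in>V. s u w * ?\<delta> (m v) w) = s u (m v)"
    using finite_V v by (simp add: if_distrib cong: if_cong)
  finally show ?thesis using row_sum_sgn[OF u] by (simp add: A2_def)
qed

lemma A_A2_sym: "(\<Sum>w\<in>V. s u w * A2 G w v) = (\<Sum>w\<in>V. s v w * A2 G w u)"
proof -
  have "(\<Sum>w\<in>V. s u w * A2 G w v) = (\<Sum>w\<in>V. \<Sum>z\<in>V. s u w * (s w z * s z v))"
    unfolding A2_def by (simp add: sum_distrib_left)
  also have "\<dots> = (\<Sum>z\<in>V. \<Sum>w\<in>V. s v z * (s z w * s w u))"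
    by (subst sum.swap, intro sum.cong refl) (metis sgn_sym mult.commute mult.left_commute)
  also have "\<dots> = (\<Sum>w\<in>V. s v w * A2 G w u)"
    unfolding A2_def by (simp add: sum_distrib_left)
  finally show ?thesis .
qed

lemma sgn_mate_commute:
  assumes u: "u \<in> V" and v: "v \<in> V"
  shows "s u (m v) = s (m u) v"
proof -
  have "(a + b - 2 * c) * s u (m v) = (a + b - 2 * c) * s v (m u)"
    using A_A2_sym[of u v] A_A2_eq[OF u v] A_A2_eq[OF v u] A2_sym[of u v] sgn_sym[of u v] by simp
  then show ?thesis using mate_coeff_nonzero sgn_sym by simp
qed

lemma unbalanced_triangle_mate_pair:
  assumes "has_unbalanced_triangle G"
  obtains x y where "x \<in> V" "s x y = 1" "s (m x) y = 1"
proof -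
  obtain u v w where uvw: "u \<in> V" "v \<in> V" "w \<in> V" "u \<noteq> w"
    "s u v \<noteq> 0" "s v w \<noteq> 0" "s w u \<noteq> 0" "s u v * s v w * s w u = -1"
    using assms unfolding has_unbalanced_triangle_def adj_def by blast
  have signs: "s u v \<in> {-1, 1}" "s v w \<in> {-1, 1}" "s w u \<in> {-1, 1}"
    using uvw sgn_cases by blast+
  consider "s u v = -1" "s v w = 1" "s w u = 1" | "s u v = 1" "s v w = -1" "s w u = 1"
    | "s u v = 1" "s v w = 1" "s w u = -1" | "s u v = -1" "s v w = -1" "s w u = -1"
    using signs uvw(8) by fastforce
  then show ?thesis
  proof cases
    case 1
    then have "v = m u" using eq_mate_if_neg uvw(1) by blast
    then show ?thesis using that[of u w] 1 uvw(1) sgn_sym[of u w] by simp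
  next
    case 2
    then have "w = m v" using eq_mate_if_neg uvw(2) by blast
    then show ?thesis using that[of v u] 2 uvw(2) sgn_sym[of u v] by simp
  next
    case 3
    then have "u = m w" using eq_mate_if_neg uvw(3) by blast
    then show ?thesis using that[of w v] 3 uvw(3) sgn_sym[of v w] by simp
  next
    case 4
    then have "v = m u" "w = m v" using eq_mate_if_neg uvw(1,2) by blast+
    then show ?thesis using uvw by simp
  qed
qed

lemma b_eq_sum_pos_nbhd: "x \<in> V \<Longrightarrow> b = (\<Sum>w\<in>P x. s w (m x))"
  using A2_eq_sum[of x "m x"] A2_neg[of x "m x"] by simp

lemma sgn_to_mate_nonneg: "x \<in> V \<Longrightarrow> w \<in> P x \<Longrightarrow> 0 \<le> s w (m x)"
  using sgn_cases[of w "m x"] eq_mate_if_neg[of "m x" w] sgn_sym[of w "m x"] by force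

lemma one_le_b_if_unbalanced_triangle:
  assumes "has_unbalanced_triangle G"
  shows "1 \<le> b"
proof -
  obtain x y where x: "x \<in> V" and xy: "s x y = 1" "s (m x) y = 1"
    using unbalanced_triangle_mate_pair[OF assms] .
  have y: "y \<in> P x" using xy pos_nbhd_iff by blast
  have "s y (m x) \<le> (\<Sum>w\<in>P x. s w (m x))"
    by (rule member_le_sum[OF y]) (use sgn_to_mate_nonneg x finite_pos_nbhd in auto)
  then show ?thesis using b_eq_sum_pos_nbhd[OF x] xy sgn_sym[of y "m x"] by simp
qed

lemma pairs_disjoint:
  "x \<in> V \<Longrightarrow> y \<in> V \<Longrightarrow> x \<notin> {y, m y} \<Longrightarrow> m x \<notin> {y, m y} \<and> y \<notin> {x, m x}"
  using mate_mate[of x] mate_mate[of y] by (auto dest: arg_cong[where f = m])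

lemma pos_nbr_not_in_pair: "u \<in> V \<Longrightarrow> x \<in> P u \<Longrightarrow> x \<notin> {u, m u}"
  by auto

lemma sgn_eq_zero: "u \<in> V \<Longrightarrow> v \<notin> P u \<Longrightarrow> v \<noteq> m u \<Longrightarrow> s u v = 0"
  using sgn_eq_if[of u v] by simp

lemma V_eq_if_closed:
  assumes conn: "connected G" and S: "S \<subseteq> V" "u0 \<in> S"
    and closed: "\<And>x. x \<in> S \<Longrightarrow> m x \<in> S \<and> P x \<subseteq> S"
  shows "V = S"
proof
  show "V \<subseteq> S"
  proof
    fix v assume "v \<in> V"
    then have "(adj G)\<^sup>*\<^sup>* u0 v" using conn S unfolding connected_def by blast
    then show "v \<in> S"
    proof (induction rule: rtranclp_induct)
      case base
      show ?case by (rule S(2))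
    next
      case (step y x)
      have "y \<in> V" using step.IH S(1) by blast
      then have "x \<in> P y \<or> x = m y"
        using step.hyps(2) sgn_eq_if[of y x] unfolding adj_def by (auto split: if_splits)
      then show ?case using closed[OF step.IH] by blast
    qed
  qed
qed (rule S(1))

end

section \<open>Mates share their positive neighbours\<close>

locale srsg_5_3_b_pos = srsg_5_3 +
  assumes b_pos: "1 \<le> b"
begin

lemma mate_has_pos_nbr_in_pos_nbhd:
  assumes u: "u \<in> V"
  obtains w where "w \<in> P u" "s (m u) w = 1"
proof -
  have "\<not> (\<forall>w\<in>P u. s w (m u) \<le> 0)"
    using sum_nonpos[of "P u" "\<lambda>w. s w (m u)"] b_eq_sum_pos_nbhd[OF u] b_pos by auto
  then obtain w where "w \<in> P u" "s w (m u) = 1" using sgn_cases by force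
  then show ?thesis using that sgn_sym by metis
qed

lemma a_le_if_pair_in_pos_nbhd:
  assumes u: "u \<in> V" and w: "w \<in> P u" "m w \<in> P u" "s (m u) w = 1"
    and v: "v \<in> P u" "v \<noteq> w" "v \<noteq> m w"
  shows "a \<le> s v w - 1"
proof -
  let ?B = "{w, m w, v}"
  have wV: "w \<in> V" using w pos_nbhd_subset by blast
  have B: "?B \<subseteq> P u" using w v by blast
  have "card (P u - ?B) = 1"
    using card_pos_nbhd[OF u] card_Diff_subset[OF _ B] finite_pos_nbhd wV v by simp
  moreover have "(\<Sum>z\<in>P u - ?B. s z w) \<le> of_nat (card (P u - ?B)) * 1"
    by (rule sum_bounded_above) (rule sgn_le_one)
  ultimately have rest: "(\<Sum>z\<in>P u - ?B. s z w) \<le> 1" by simp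
  have "A2 G u w = (\<Sum>z\<in>P u - ?B. s z w) + (\<Sum>z\<in>?B. s z w) - 1"
    using A2_eq_sum[OF u] sum.subset_diff[OF B finite_pos_nbhd] w by simp
  also have "(\<Sum>z\<in>?B. s z w) = s v w - 1"
    using wV v by simp
  finally show ?thesis using rest A2_pos[OF u wV] w pos_nbhd_iff by simp
qed

lemma le_a_if_mate_not_in_pos_nbhd:
  assumes u: "u \<in> V" and v: "v \<in> P u" "m v \<notin> P u" "s (m u) v = 0" and w: "w \<in> P u"
  shows "s w v \<le> a"
proof -
  have vV: "v \<in> V" using v pos_nbhd_subset by blast
  have "s w v \<le> (\<Sum>z\<in>P u. s z v)"
  proof (rule member_le_sum[OF w _ finite_pos_nbhd])
    fix z assume z: "z \<in> P u - {w}"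
    show "0 \<le> s z v"
      using sgn_cases[of z v] eq_mate_if_neg[OF vV, of z] sgn_sym[of z v] z v by force
  qed
  then show ?thesis using A2_eq_sum[OF u] A2_pos[OF u vV] v pos_nbhd_iff by simp
qed

text \<open>Otherwise pick \<open>w \<in> P u\<close> positively adjacent to \<open>m u\<close>. By commutation \<open>w\<close>, \<open>m w\<close> and
  \<open>v\<close> lie in \<open>P u\<close> while \<open>m v\<close> does not, and then \<open>A\<^sup>2\<close> at \<open>(u, w)\<close> and at \<open>(u, v)\<close> gives
  \<open>s v w \<le> a \<le> s v w - 1\<close>.\<close>
lemma mate_keeps_pos_nbrs:
  assumes u: "u \<in> V" and uv: "s u v = 1"
  shows "s (m u) v = 1"
proof (rule ccontr)
  assume "s (m u) v \<noteq> 1"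
  moreover have "s (m u) v \<noteq> -1"
    using eq_mate_if_neg[of "m u" v] u uv by auto
  ultimately have muv: "s (m u) v = 0" using sgn_cases by blast
  have v: "v \<in> P u" "v \<in> V" using uv pos_nbhd_iff sgn_nonzero_in_V[of u v] by auto
  obtain w where w: "w \<in> P u" "s (m u) w = 1"
    using mate_has_pos_nbr_in_pos_nbhd[OF u] .
  have wV: "w \<in> V" using w pos_nbhd_subset by blast
  have mw: "m w \<in> P u" using sgn_mate_commute[OF u wV] w pos_nbhd_iff by simp
  have mv: "m v \<notin> P u" using sgn_mate_commute[OF u v(2)] muv pos_nbhd_iff by simp
  have "s (m u) (m w) = 1"
    using sgn_mate_commute[of "m u" w] u wV w pos_nbhd_iff by simp
  then have "v \<noteq> w" "v \<noteq> m w" using muv w by auto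
  then have "a \<le> s v w - 1" using a_le_if_pair_in_pos_nbhd[OF u w(1) mw w(2) v(1)] by blast
  moreover have "s w v \<le> a" using le_a_if_mate_not_in_pos_nbhd[OF u v(1) mv muv w(1)] .
  ultimately show False using sgn_sym[of v w] by simp
qed

lemma pos_nbhd_mate [simp]:
  assumes u: "u \<in> V"
  shows "P (m u) = P u"
proof
  show "P u \<subseteq> P (m u)" using mate_keeps_pos_nbrs[OF u] pos_nbhd_iff by blast
  show "P (m u) \<subseteq> P u" using mate_keeps_pos_nbrs[of "m u"] u pos_nbhd_iff by auto
qed

lemma mate_in_pos_nbhd_iff: "u \<in> V \<Longrightarrow> x \<in> V \<Longrightarrow> m x \<in> P u \<longleftrightarrow> x \<in> P u"
  using pos_nbhd_sym[of "m x" u] pos_nbhd_sym[of x u] pos_nbhd_mate[of x] by simp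

lemma pos_nbhd_eq_pairs:
  assumes u: "u \<in> V" and x: "x \<in> P u" and y: "y \<in> P u" "y \<notin> {x, m x}"
  shows "P u = {x, m x, y, m y}"
proof -
  have V: "x \<in> V" "y \<in> V" using x y pos_nbhd_subset by blast+
  have sub: "{x, m x, y, m y} \<subseteq> P u" using x y mate_in_pos_nbhd_iff[OF u] V by blast
  have "card {x, m x, y, m y} = 4" using y pairs_disjoint[OF V(2,1) y(2)] V by auto
  then show ?thesis using card_subset_eq[OF finite_pos_nbhd sub] card_pos_nbhd[OF u] by simp
qed

lemma pos_nbhd_pairs:
  assumes u: "u \<in> V" and w: "w \<in> P u"
  obtains z where "P u = {w, m w, z, m z}" "z \<in> P u" "z \<notin> {w, m w}"
proof -
  have wV: "w \<in> V" using w pos_nbhd_subset by blast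
  then have "{w, m w} \<subseteq> P u" using w mate_in_pos_nbhd_iff[OF u] by blast
  then have "card (P u - {w, m w}) = 2"
    using card_pos_nbhd[OF u] card_Diff_subset[of "{w, m w}" "P u"] wV by simp
  then have "P u - {w, m w} \<noteq> {}" by (metis card.empty zero_neq_numeral)
  then obtain z where "z \<in> P u" "z \<notin> {w, m w}" by blast
  then show ?thesis using that pos_nbhd_eq_pairs[OF u w] by blast
qed

lemma not_in_pair_if_pos_nbr:
  "q \<in> V \<Longrightarrow> x \<in> P q \<Longrightarrow> y \<in> V \<Longrightarrow> y \<notin> P q \<Longrightarrow> x \<notin> {y, m y}"
  using mate_in_pos_nbhd_iff[of q y] by auto

lemma sgn_mate_left: "x \<in> V \<Longrightarrow> v \<notin> {x, m x} \<Longrightarrow> s (m x) v = s x v"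
  using sgn_eq_if[of x v] sgn_eq_if[of "m x" v] by simp

lemma c_eq_via_pos_nbhd:
  assumes u: "u \<in> V" and v: "v \<in> V" and Pu: "P u = {w, m w, z, m z}"
    and wz: "z \<notin> {w, m w}" and v_far: "v \<notin> {u, m u, w, m w, z, m z}"
  shows "c = 2 * (s w v + s z v)"
proof -
  have V: "w \<in> V" "z \<in> V" using Pu pos_nbhd_subset by blast+
  have "s u v = 0" "s (m u) v = 0" using u v_far Pu sgn_eq_if[of u v] sgn_eq_if[of "m u" v] by auto
  moreover have "u \<noteq> v" using v_far by blast
  ultimately have "c = A2 G u v" using A2_nonadj[OF u v] by simp
  also have "\<dots> = s w v + s (m w) v + s z v + s (m z) v"
  proof -
    have "distinct [w, m w, z, m z]" using wz pairs_disjoint[OF V(2,1) wz] V by auto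
    then show ?thesis
      using A2_eq_sum[OF u, of v] Pu \<open>s (m u) v = 0\<close> sum.distinct_set_conv_list[of "[w, m w, z, m z]"]
      by simp
  qed
  finally show ?thesis using sgn_mate_left[OF V(1), of v] sgn_mate_left[OF V(2), of v] v_far by simp
qed

end

section \<open>Cycles of mate pairs\<close>

text \<open>\<open>cs\<close> lists one vertex of each mate pair, in the cyclic order of the pairs.\<close>
locale mate_cycle = srsg_5_3_b_pos +
  fixes cs :: "'a list"
  assumes connected: "connected G" and length_cs: "3 \<le> length cs" and cs_V: "set cs \<subseteq> V"
    and distinct_pairs: "distinct (cs @ map m cs)"
    and pos_nbhd_cs: "\<And>i. i < length cs \<Longrightarrow> P (cs ! i) =
      {cs ! ((i + 1) mod length cs), m (cs ! ((i + 1) mod length cs)),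
       cs ! ((i + length cs - 1) mod length cs), m (cs ! ((i + length cs - 1) mod length cs))}"
begin

abbreviation "k \<equiv> length cs"

definition vertex_of :: "nat \<times> bool \<Rightarrow> 'a" where
  "vertex_of = (\<lambda>(t, p). if p then m (cs ! t) else cs ! t)"

lemma nth_in_V: "t < k \<Longrightarrow> cs ! t \<in> V"
  using cs_V by auto

lemma nth_mod_in_set: "cs ! (j mod k) \<in> set cs"
  using length_cs by (intro nth_mem mod_less_divisor) linarith

lemma V_eq: "V = set cs \<union> m ` set cs"
proof (rule V_eq_if_closed[OF connected])
  show "set cs \<union> m ` set cs \<subseteq> V" using cs_V by auto
  show "cs ! 0 \<in> set cs \<union> m ` set cs" using nth_mod_in_set[of 0] by simp
  fix x assume "x \<in> set cs \<union> m ` set cs"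
  then obtain i where i: "i < k" "x = cs ! i \<or> x = m (cs ! i)"
    by (auto simp: in_set_conv_nth)
  have "P x = P (cs ! i)" using i nth_in_V[OF i(1)] by auto
  then show "m x \<in> set cs \<union> m ` set cs \<and> P x \<subseteq> set cs \<union> m ` set cs"
    using i nth_in_V[OF i(1)] pos_nbhd_cs[OF i(1)] nth_mod_in_set by auto
qed

lemma vertex_of_eq_iff:
  "t < k \<Longrightarrow> t' < k \<Longrightarrow> vertex_of (t, p) = vertex_of (t', q) \<longleftrightarrow> t = t' \<and> p = q"
proof -
  have "vertex_of (t, p) = (cs @ map m cs) ! (if p then k + t else t)" if "t < k" for t p
    using that by (simp add: vertex_of_def nth_append)
  then show "t < k \<Longrightarrow> t' < k \<Longrightarrow> ?thesis" using nth_eq_iff_index_eq[OF distinct_pairs] by auto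
qed

lemma mate_vertex_of: "t < k \<Longrightarrow> m (vertex_of (t, p)) = vertex_of (t, \<not> p)"
  using nth_in_V by (simp add: vertex_of_def)

lemma vertex_of_in_pos_nbhd_iff:
  assumes "t < k" "t' < k"
  shows "vertex_of (t', q) \<in> P (vertex_of (t, p)) \<longleftrightarrow> t' = (t + 1) mod k \<or> t = (t' + 1) mod k"
proof -
  let ?a = "(t + 1) mod k" and ?b = "(t + k - 1) mod k"
  have "0 < k" using length_cs by linarith
  then have ab: "?a < k" "?b < k" by simp_all
  have "P (vertex_of (t, p)) =
      {vertex_of (?a, False), vertex_of (?a, True), vertex_of (?b, False), vertex_of (?b, True)}"
    using nth_in_V[OF assms(1)] pos_nbhd_cs[OF assms(1)] by (simp add: vertex_of_def)
  then show ?thesis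
    using vertex_of_eq_iff[OF assms(2) ab(1)] vertex_of_eq_iff[OF assms(2) ab(2)] pred_mod_eq_iff[OF assms]
    by auto
qed

lemma bij_betw_vertex_of: "bij_betw vertex_of ({0..<k} \<times> UNIV) V"
proof -
  have "vertex_of ` ({0..<k} \<times> UNIV) = V"
  proof
    show "vertex_of ` ({0..<k} \<times> UNIV) \<subseteq> V" using nth_in_V by (auto simp: vertex_of_def)
    show "V \<subseteq> vertex_of ` ({0..<k} \<times> UNIV)"
    proof
      fix x assume "x \<in> V"
      then obtain t where t: "t < k" "x = vertex_of (t, False) \<or> x = vertex_of (t, True)"
        unfolding V_eq by (auto simp: vertex_of_def in_set_conv_nth)
      then show "x \<in> vertex_of ` ({0..<k} \<times> UNIV)" by auto
    qed
  qed
  moreover have "inj_on vertex_of ({0..<k} \<times> UNIV)"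
    by (auto intro!: inj_onI simp: vertex_of_eq_iff)
  ultimately show ?thesis unfolding bij_betw_def by blast
qed

lemma sgn_vertex_of:
  assumes "t < k" "t' < k"
  shows "s (vertex_of (t, p)) (vertex_of (t', q)) = sgn (S1 k) (t, p) (t', q)"
proof -
  have "vertex_of (t', q) = m (vertex_of (t, p)) \<longleftrightarrow> t = t' \<and> p \<noteq> q"
    using mate_vertex_of[OF assms(1)] vertex_of_eq_iff[OF assms(2,1)] by auto
  moreover have "vertex_of (t, p) \<in> V"
    using bij_betw_apply[OF bij_betw_vertex_of, of "(t, p)"] assms(1) by simp
  ultimately have "s (vertex_of (t, p)) (vertex_of (t', q)) =
      (if t' = (t + 1) mod k \<or> t = (t' + 1) mod k then 1 else if t = t' \<and> p \<noteq> q then -1 else 0)"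
    using sgn_eq_if vertex_of_in_pos_nbhd_iff[OF assms] by simp
  moreover have "t' = (t + 1) mod k \<or> t = (t' + 1) mod k \<Longrightarrow> t \<noteq> t'"
    using succ_mod_neq[OF _ assms(1)] length_cs by auto
  ultimately show ?thesis using sgn_S1[OF assms] by auto
qed

lemma sg_iso_S1: "sg_iso G (S1 k)"
proof -
  have "sg_iso (S1 k) G"
    unfolding sg_iso_def verts_S1 using bij_betw_vertex_of sgn_vertex_of
    by (intro exI[of _ vertex_of]) auto
  then show ?thesis by (rule sg_iso_sym)
qed

end

section \<open>The length of the cycle\<close>

text \<open>The mate pairs of \<open>w\<close> and \<open>z\<close> make up the positive neighbourhood of \<open>u\<close>; those of \<open>w2\<close>
  and \<open>z2\<close> come next along the cycle of mate pairs.\<close>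
locale mate_pair_path = srsg_5_3_b_pos +
  fixes u w z w2 z2 :: 'a
  assumes u: "u \<in> V"
    and P_u: "P u = {w, m w, z, m z}" and wz: "z \<notin> {w, m w}"
    and P_w: "P w = {u, m u, w2, m w2}" and uw2: "w2 \<notin> {u, m u}"
    and P_z: "P z = {u, m u, z2, m z2}" and uz2: "z2 \<notin> {u, m u}"
begin

lemma in_pos_nbhds: "w \<in> P u" "z \<in> P u" "u \<in> P w" "w2 \<in> P w" "u \<in> P z" "z2 \<in> P z"
  using P_u P_w P_z by auto

lemma in_V [simp]: "w \<in> V" "z \<in> V" "w2 \<in> V" "z2 \<in> V"
  using in_pos_nbhds pos_nbhd_subset by blast+

lemma complete_if_triangle:
  assumes conn: "connected G" and zw: "z \<in> P w"
  shows "complete G"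
proof -
  have "w \<in> P z" using zw pos_nbhd_sym by blast
  then have P_w': "P w = {u, m u, z, m z}" and P_z': "P z = {u, m u, w, m w}"
    using pos_nbhd_eq_pairs[OF in_V(1) in_pos_nbhds(3) zw] pos_nbhd_eq_pairs[OF in_V(2) in_pos_nbhds(5)]
      pos_nbr_not_in_pair[OF u] in_pos_nbhds by auto
  define S where "S = {u, m u, w, m w, z, m z}"
  have nbhd: "S = insert x (insert (m x) (P x))" if "x \<in> S" for x
    using that u P_u P_w' P_z' unfolding S_def by auto
  have "V = S"
    by (rule V_eq_if_closed[OF conn, of S u]) (use u nbhd in \<open>auto simp: S_def\<close>)
  then show ?thesis
    unfolding complete_def adj_def using nbhd sgn_eq_if by fastforce
qed

lemma pairs_apart: "w \<notin> {u, m u}" "z \<notin> {u, m u}" "w2 \<notin> {w, m w}" "z2 \<notin> {z, m z}"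
  using pos_nbr_not_in_pair in_pos_nbhds u in_V by blast+

lemma w2_apart_z: "z \<notin> P w \<Longrightarrow> w2 \<notin> {z, m z}"
  using not_in_pair_if_pos_nbr[OF in_V(1) in_pos_nbhds(4) in_V(2)] .

lemma iso_S1_4_if_square:
  assumes conn: "connected G" and zw: "z \<notin> P w" and w2z: "w2 \<in> P z"
  shows "sg_iso G (S1 4)"
proof -
  have zw2: "z \<in> P w2" and ww2: "w \<in> P w2" using w2z in_pos_nbhds pos_nbhd_sym by blast+
  have w2_z: "w2 \<notin> {z, m z}" using w2_apart_z[OF zw] .
  have P_z': "P z = {u, m u, w2, m w2}"
    using pos_nbhd_eq_pairs[OF in_V(2) in_pos_nbhds(5) w2z] uw2 by simp
  have P_w2: "P w2 = {w, m w, z, m z}"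
    using pos_nbhd_eq_pairs[OF in_V(3) ww2 zw2] wz by simp
  have dist: "distinct ([u, w, w2, z] @ map m [u, w, w2, z])"
    using pairs_apart uw2 wz w2_z u
      pairs_disjoint[OF _ _ pairs_apart(1)] pairs_disjoint[OF _ _ pairs_apart(2)]
      pairs_disjoint[OF _ _ pairs_apart(3)] pairs_disjoint[OF _ _ uw2] pairs_disjoint[OF _ _ wz]
      pairs_disjoint[OF _ _ w2_z]
    by auto
  have cyc: "P ([u, w, w2, z] ! i) = {[u, w, w2, z] ! ((i + 1) mod 4), m ([u, w, w2, z] ! ((i + 1) mod 4)),
      [u, w, w2, z] ! ((i + 4 - 1) mod 4), m ([u, w, w2, z] ! ((i + 4 - 1) mod 4))}" if "i < 4" for i
  proof -
    have "i = 0 \<or> i = 1 \<or> i = 2 \<or> i = 3" using that by auto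
    then show ?thesis using P_u P_w P_z' P_w2 by (auto simp: insert_commute)
  qed
  interpret square: mate_cycle G n r a b c "[u, w, w2, z]"
    by unfold_locales (use conn dist cyc u in simp_all)
  show ?thesis using square.sg_iso_S1 by (simp add: eval_nat_numeral)
qed

lemma iso_S1_5_if_pentagon:
  assumes conn: "connected G" and zw: "z \<notin> P w" and w2z: "w2 \<notin> P z" and z2w2: "z2 \<in> P w2"
  shows "sg_iso G (S1 5)"
proof -
  have w_Pz: "w \<notin> P z" using zw pos_nbhd_sym by blast
  have ww2: "w \<in> P w2" and zz2: "z \<in> P z2" and w2z2: "w2 \<in> P z2"
    using z2w2 in_pos_nbhds pos_nbhd_sym by blast+
  have w2_z: "w2 \<notin> {z, m z}" using w2_apart_z[OF zw] .
  have z2_w: "z2 \<notin> {w, m w}" using not_in_pair_if_pos_nbr[OF in_V(2) in_pos_nbhds(6) in_V(1) w_Pz] .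
  have z2_w2: "z2 \<notin> {w2, m w2}" using pos_nbr_not_in_pair[OF in_V(3) z2w2] .
  have P_w2: "P w2 = {w, m w, z2, m z2}"
    using pos_nbhd_eq_pairs[OF in_V(3) ww2 z2w2] z2_w by simp
  have P_z2: "P z2 = {z, m z, w2, m w2}"
    using pos_nbhd_eq_pairs[OF in_V(4) zz2 w2z2] w2_z by simp
  have dist: "distinct ([u, w, w2, z2, z] @ map m [u, w, w2, z2, z])"
    using pairs_apart uw2 uz2 wz w2_z z2_w z2_w2 u
      pairs_disjoint[OF _ _ pairs_apart(1)] pairs_disjoint[OF _ _ pairs_apart(2)]
      pairs_disjoint[OF _ _ pairs_apart(3)] pairs_disjoint[OF _ _ pairs_apart(4)] pairs_disjoint[OF _ _ uw2]
      pairs_disjoint[OF _ _ uz2] pairs_disjoint[OF _ _ wz] pairs_disjoint[OF _ _ w2_z]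
      pairs_disjoint[OF _ _ z2_w] pairs_disjoint[OF _ _ z2_w2]
    by auto
  have cyc: "P ([u, w, w2, z2, z] ! i) =
      {[u, w, w2, z2, z] ! ((i + 1) mod 5), m ([u, w, w2, z2, z] ! ((i + 1) mod 5)),
       [u, w, w2, z2, z] ! ((i + 5 - 1) mod 5), m ([u, w, w2, z2, z] ! ((i + 5 - 1) mod 5))}"
    if "i < 5" for i
  proof -
    have "i = 0 \<or> i = 1 \<or> i = 2 \<or> i = 3 \<or> i = 4" using that by auto
    then show ?thesis using P_u P_w P_z P_w2 P_z2 by (auto simp: insert_commute)
  qed
  interpret pentagon: mate_cycle G n r a b c "[u, w, w2, z2, z]"
    by unfold_locales (use conn dist cyc u in simp_all)
  show ?thesis using pentagon.sg_iso_S1 by (simp add: eval_nat_numeral)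
qed

lemma c_eq_two:
  assumes zw: "z \<notin> P w" and w2z: "w2 \<notin> P z"
  shows "c = 2"
proof -
  have "c = 2 * (s w w2 + s z w2)"
    by (rule c_eq_via_pos_nbhd[OF u in_V(3) P_u wz]) (use uw2 pairs_apart(3) w2_apart_z[OF zw] in auto)
  moreover have "s w w2 = 1" "s z w2 = 0"
    using in_pos_nbhds(4) pos_nbhd_iff sgn_eq_zero[OF in_V(2) w2z] w2_apart_z[OF zw] by auto
  ultimately show ?thesis by simp
qed

lemma cycle_longer_than_5_impossible:
  assumes zw: "z \<notin> P w" and w2z: "w2 \<notin> P z" and z2w2: "z2 \<notin> P w2"
  shows False
proof -
  have c2: "c = 2" using c_eq_two[OF zw w2z] .
  have ww2: "w \<in> P w2" using in_pos_nbhds pos_nbhd_sym by blast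
  obtain y where P_w2: "P w2 = {w, m w, y, m y}" and yw2: "y \<in> P w2" and y_w: "y \<notin> {w, m w}"
    using pos_nbhd_pairs[OF in_V(3) ww2] .
  have yV: "y \<in> V" using yw2 pos_nbhd_subset by blast
  have "w2 \<notin> P u" using P_u pairs_apart(3) w2_apart_z[OF zw] by auto
  then have w_Pz: "w \<notin> P z" and uw2': "u \<notin> P w2" and zw2: "z \<notin> P w2"
    using zw w2z pos_nbhd_sym by blast+
  have z2_w: "z2 \<notin> {w, m w}" using not_in_pair_if_pos_nbr[OF in_V(2) in_pos_nbhds(6) in_V(1) w_Pz] .
  have z2_w2: "z2 \<notin> {w2, m w2}" using not_in_pair_if_pos_nbr[OF in_V(2) in_pos_nbhds(6) in_V(3) w2z] .
  have z2_y: "z2 \<notin> {y, m y}"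
    using pairs_disjoint[OF yV in_V(4) not_in_pair_if_pos_nbr[OF in_V(3) yw2 in_V(4) z2w2]] by blast
  have "c = 2 * (s w z2 + s y z2)"
    by (rule c_eq_via_pos_nbhd[OF in_V(3) in_V(4) P_w2 y_w]) (use z2_w2 z2_w z2_y in auto)
  moreover have "s w z2 = 0"
    using sgn_eq_zero[OF in_V(1), of z2] P_w uz2 z2_w2 z2_w by auto
  ultimately have "s y z2 = 1" using c2 by simp
  then have y_z2: "y \<notin> {z2, m z2}"
    using pos_nbr_not_in_pair[OF in_V(4), of y] pos_nbhd_iff pos_nbhd_sym by blast
  have y_u: "y \<notin> {u, m u}" using not_in_pair_if_pos_nbr[OF in_V(3) yw2 u uw2'] .
  have y_z: "y \<notin> {z, m z}" using not_in_pair_if_pos_nbr[OF in_V(3) yw2 in_V(2) zw2] .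
  have y_w2: "y \<notin> {w2, m w2}" using pos_nbr_not_in_pair[OF in_V(3) yw2] .
  have "c = 2 * (s w y + s z y)"
    by (rule c_eq_via_pos_nbhd[OF u yV P_u wz]) (use y_u y_w y_z in auto)
  moreover have "s w y = 0" "s z y = 0"
    using sgn_eq_zero[OF in_V(1), of y] sgn_eq_zero[OF in_V(2), of y] P_w P_z y_u y_w2 y_w y_z y_z2
    by auto
  ultimately show False using c2 by simp
qed

end

context srsg_5_3_b_pos
begin

lemma sg_iso_S1_4_or_5:
  assumes conn: "connected G" and not_complete: "\<not> complete G"
  shows "sg_iso G (S1 4) \<or> sg_iso G (S1 5)"
proof -
  obtain u where u: "u \<in> V"
    using params sgn_nonzero_in_V unfolding srsg_params_def edgeless_def by blast
  then have "P u \<noteq> {}" using card_pos_nbhd by fastforce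
  then obtain w where w: "w \<in> P u" by blast
  then obtain z where P_u: "P u = {w, m w, z, m z}" and z: "z \<in> P u" "z \<notin> {w, m w}"
    using pos_nbhd_pairs[OF u] by blast
  have V: "w \<in> V" "z \<in> V" using w z pos_nbhd_subset by blast+
  have "u \<in> P w" "u \<in> P z" using w z pos_nbhd_sym by blast+
  then obtain w2 z2 where P_w: "P w = {u, m u, w2, m w2}" "w2 \<notin> {u, m u}"
    and P_z: "P z = {u, m u, z2, m z2}" "z2 \<notin> {u, m u}"
    using pos_nbhd_pairs[OF V(1)] pos_nbhd_pairs[OF V(2)] by metis
  interpret mate_pair_path G n r a b c u w z w2 z2
    using u P_u z(2) P_w P_z by unfold_locales
  consider "z \<in> P w" | "z \<notin> P w" "w2 \<in> P z" | "z \<notin> P w" "w2 \<notin> P z" "z2 \<in> P w2"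
    | "z \<notin> P w" "w2 \<notin> P z" "z2 \<notin> P w2" by blast
  then show ?thesis
    using complete_if_triangle[OF conn] iso_S1_4_if_square[OF conn] iso_S1_5_if_pentagon[OF conn]
      cycle_longer_than_5_impossible not_complete
    by cases blast+
qed

end

lemma class_C145_params:
  assumes "class_C1 G \<or> class_C4 G \<or> class_C5 G" and "\<not> complete G"
  obtains n r a b c where "srsg_params G n r a b c" "a + b \<noteq> 2 * c"
  using assms unfolding class_C1_def class_C4_def class_C5_def by fastforce

theorem lemma3p1:
  fixes G :: "'a sgraph"
  assumes "srsg G"
    and "connected G"
    and "\<not> complete G"
    and "regular G 5"
    and "net_regular G 3"
    and "class_C1 G \<or> class_C4 G \<or> class_C5 G"
    and "has_unbalanced_triangle G"
  shows "(sg_iso G (S1 4) \<and> srsg_params (S1 4) 8 5 (-2) 4 4)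
       \<or> (sg_iso G (S1 5) \<and> srsg_params (S1 5) 10 5 (-2) 4 2)"
proof -
  \<comment> \<open>The hypothesis \<open>srsg G\<close> is implied by the class hypothesis and not needed.\<close>
  obtain n r a b c where params: "srsg_params G n r a b c" and mate_coeff_nonzero: "a + b \<noteq> 2 * c"
    using class_C145_params[OF assms(6,3)] .
  interpret srsg_5_3 G n r a b c
    using params assms(4,5) mate_coeff_nonzero by unfold_locales
  interpret srsg_5_3_b_pos G n r a b c
    using one_le_b_if_unbalanced_triangle[OF assms(7)] by unfold_locales
  have "sg_iso G (S1 4) \<or> sg_iso G (S1 5)"
    using sg_iso_S1_4_or_5 assms(2,3) by blast
  then show ?thesis using srsg_params_S1_4 srsg_params_S1_5 by blast
qed

end
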